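(* Let $V$ be a real vector space endowed with some topology and $X$ a convex cone in $V$ with $0\in X$. Suppose $w\in\mathbb{R}$, $f\in P_X$, and $R$ is a locally nonsatiated total preorder on $X$. If $C\subseteq X$ is a convex cone in $V$ and $R$ is $C$-antichain-convex, then $$\mathcal{M}(R,B^w_{f,X})\neq\emptyset\ \Longrightarrow\ \mathcal{M}(R,B^w_{f,X})=\mathcal{M}(R^{\operatorname{co}},B^w_{f,X}).$$
   Context: A cone in $V$ is a subset $K$ with $\lambda K\subseteq K$ for all $\lambda>0$ (possibly empty, need not contain $0$). $V^*$ denotes the continuous linear functionals on $V$; $P_X=\{f\in V^*: f(x)>0\text{ for all }x\in X\setminus\{0\}\}$; $F^w_f=\{v\in V:f(v)\le w\}$, $B^w_{f,X}=F^w_f\cap X$. A set $A$ is $C$-antichain-convex iff for all $x,y\in A$, $\lambda\in[0,1]$ with $y-x\notin C\cup(-C)$, $\lambda x+(1-\lambda)y\in A$. For a relation $R\subseteq X\times X$, $R(x)=\{t\in X:(t,x)\in R\}$; $R$ is total iff for all $s,t$, $t\in R(s)$ or $s\in R(t)$; transitive iff $r\in R(s)$ and $s\in R(t)$ imply $r\in R(t)$; a total preorder is a total transitive relation; $R$ is $C$-antichain-convex iff each $R(x)$ is $C$-antichain-convex; $R$ is locally nonsatiated iff $x\in\operatorname{cl}(\{y\in X:y\in R(x),\ x\notin R(y)\})$ for all $x\in X$. The convexification $R^{\operatorname{co}}$ is the relation on $X$ with $R^{\operatorname{co}}(x)=\operatorname{co}(R(x))$. For $S\subseteq X$ and a relation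 $Q$ on $X$, $m\in S$ is $Q$-maximal on $S$ iff for every $s\in S$ with $s\in Q(m)$, $m\in Q(s)$; $\mathcal{M}(Q,S)$ is the set of these. *)

theory Defs
  imports "HOL-Analysis.Analysis"
begin

text \<open>Cone in the paper's sense: closed under positive scalings (may be empty, need not contain 0).\<close>
definition pcone :: "'v::real_vector set \<Rightarrow> bool" where
  "pcone K \<longleftrightarrow> (\<forall>x\<in>K. \<forall>l::real. l > 0 \<longrightarrow> l *\<^sub>R x \<in> K)"

definition dual_space :: "('v::{real_vector,topological_space} \<Rightarrow> real) set" where
  "dual_space = {f. linear f \<and> continuous_on UNIV f}"

definition PX :: "'v::{real_vector,topological_space} set \<Rightarrow> ('v \<Rightarrow> real) set" where
  "PX X = {f \<in> dual_space. \<forall>x \<in> X - {0}. f x > 0}"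

definition Fw :: "real \<Rightarrow> ('v \<Rightarrow> real) \<Rightarrow> 'v set" where
  "Fw w f = {v. f v \<le> w}"

definition Bw :: "real \<Rightarrow> ('v \<Rightarrow> real) \<Rightarrow> 'v set \<Rightarrow> 'v set" where
  "Bw w f X = Fw w f \<inter> X"

definition antichain_convex :: "'v::real_vector set \<Rightarrow> 'v set \<Rightarrow> bool" where
  "antichain_convex C A \<longleftrightarrow>
     (\<forall>x\<in>A. \<forall>y\<in>A. \<forall>l::real. 0 \<le> l \<and> l \<le> 1 \<and> y - x \<notin> C \<union> uminus ` C
        \<longrightarrow> l *\<^sub>R x + (1 - l) *\<^sub>R y \<in> A)"

definition sect :: "'a set \<Rightarrow> ('a \<times> 'a) set \<Rightarrow> 'a \<Rightarrow> 'a set" where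
  "sect X R x = {t \<in> X. (t, x) \<in> R}"

definition rel_total :: "'a set \<Rightarrow> ('a \<times> 'a) set \<Rightarrow> bool" where
  "rel_total X R \<longleftrightarrow> (\<forall>s\<in>X. \<forall>t\<in>X. t \<in> sect X R s \<or> s \<in> sect X R t)"

definition rel_trans :: "'a set \<Rightarrow> ('a \<times> 'a) set \<Rightarrow> bool" where
  "rel_trans X R \<longleftrightarrow> (\<forall>r\<in>X. \<forall>s\<in>X. \<forall>t\<in>X.
      r \<in> sect X R s \<and> s \<in> sect X R t \<longrightarrow> r \<in> sect X R t)"

definition total_preorder :: "'a set \<Rightarrow> ('a \<times> 'a) set \<Rightarrow> bool" where
  "total_preorder X R \<longleftrightarrow> rel_total X R \<and> rel_trans X R"

definition rel_antichain_convex :: "'v::real_vector set \<Rightarrow> 'v set \<Rightarrow> ('v \<times> 'v) set \<Rightarrow> bool" where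
  "rel_antichain_convex C X R \<longleftrightarrow> (\<forall>x\<in>X. antichain_convex C (sect X R x))"

definition locally_nonsatiated :: "'v::topological_space set \<Rightarrow> ('v \<times> 'v) set \<Rightarrow> bool" where
  "locally_nonsatiated X R \<longleftrightarrow>
     (\<forall>x\<in>X. x \<in> closure {y \<in> X. y \<in> sect X R x \<and> x \<notin> sect X R y})"

definition convexification :: "'v::real_vector set \<Rightarrow> ('v \<times> 'v) set \<Rightarrow> ('v \<times> 'v) set" where
  "convexification X R = {(t, x). x \<in> X \<and> t \<in> convex hull (sect X R x)}"

definition maximals :: "'a set \<Rightarrow> ('a \<times> 'a) set \<Rightarrow> 'a set \<Rightarrow> 'a set" where
  "maximals X Q S = {m \<in> S. \<forall>s\<in>S. s \<in> sect X Q m \<longrightarrow> m \<in> sect X Q s}"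

end

theory Submission
  imports Defs
begin

text \<open>Fix a maximal element \<open>m\<^sub>0\<close> of the budget set \<open>B\<close>; by totality it is a best element of \<open>B\<close>.
  Local nonsatiation pushes every point at least as good as \<open>m\<^sub>0\<close> onto or above the hyperplane
  \<open>f = w\<close>. On that hyperplane no two distinct points are comparable with respect to \<open>C\<close>, because
  \<open>f\<close> is positive on \<open>C - {0}\<close>; so antichain convexity makes the part of \<open>R(m\<^sub>0)\<close> on it
  convex, and adding the open half-space \<open>f > w\<close> gives a convex superset of \<open>R(m\<^sub>0)\<close>. Hence
  \<open>co R(m\<^sub>0)\<close> meets \<open>B\<close> only inside \<open>R(m\<^sub>0)\<close>, which is exactly what makes an \<open>R\<^sup>c\<^sup>o\<close>-maximal
  element \<open>R\<close>-maximal; the converse inclusion only needs totality.\<close>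

lemma rel_transD:
  "\<lbrakk>rel_trans X R; r \<in> sect X R s; s \<in> sect X R t; s \<in> X; t \<in> X\<rbrakk> \<Longrightarrow> r \<in> sect X R t"
  unfolding rel_trans_def sect_def by blast

lemma sect_convexification:
  "x \<in> X \<Longrightarrow> sect X (convexification X R) x = X \<inter> convex hull (sect X R x)"
  by (auto simp: sect_def convexification_def)

lemma sect_subset_sect_convexification:
  "x \<in> X \<Longrightarrow> sect X R x \<subseteq> sect X (convexification X R) x"
  by (auto simp: sect_def convexification_def intro: hull_inc)

lemma maximals_total_eq:
  assumes "rel_total X R" "S \<subseteq> X"
  shows "maximals X R S = {m \<in> S. \<forall>s\<in>S. m \<in> sect X R s}"
  using assms unfolding maximals_def rel_total_def by blast

lemma best_in_maximals:
  "\<lbrakk>m \<in> S; \<forall>s\<in>S. m \<in> sect X Q s\<rbrakk> \<Longrightarrow> m \<in> maximals X Q S"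
  by (simp add: maximals_def)

lemma maximals_subset_maximals_convexification:
  assumes "rel_total X R" "S \<subseteq> X"
  shows "maximals X R S \<subseteq> maximals X (convexification X R) S"
proof
  fix m assume "m \<in> maximals X R S"
  then have "m \<in> S" and best: "\<forall>s\<in>S. m \<in> sect X R s"
    by (simp_all add: maximals_total_eq[OF assms])
  have "m \<in> sect X (convexification X R) s" if "s \<in> S" for s
    using best that \<open>S \<subseteq> X\<close> sect_subset_sect_convexification[of s X R] by blast
  with \<open>m \<in> S\<close> show "m \<in> maximals X (convexification X R) S"
    by (simp add: best_in_maximals)
qed

lemma maximals_convexification_subset_maximals:
  assumes "rel_trans X R" "S \<subseteq> X"
    and best: "m\<^sub>0 \<in> S" "\<forall>s\<in>S. m\<^sub>0 \<in> sect X R s"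
    and hull_in_sect: "S \<inter> convex hull (sect X R m\<^sub>0) \<subseteq> sect X R m\<^sub>0"
  shows "maximals X (convexification X R) S \<subseteq> maximals X R S"
proof
  fix m assume m: "m \<in> maximals X (convexification X R) S"
  then have "m \<in> S" "m \<in> X" "m\<^sub>0 \<in> X" using \<open>S \<subseteq> X\<close> best(1) by (auto simp: maximals_def)
  have "m\<^sub>0 \<in> sect X (convexification X R) m"
    using best \<open>m \<in> S\<close> sect_subset_sect_convexification[OF \<open>m \<in> X\<close>] by blast
  then have "m \<in> sect X (convexification X R) m\<^sub>0"
    using m best(1) unfolding maximals_def by blast
  then have "m \<in> S \<inter> convex hull (sect X R m\<^sub>0)"
    using \<open>m \<in> S\<close> by (simp add: sect_convexification[OF \<open>m\<^sub>0 \<in> X\<close>])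
  then have "m \<in> sect X R m\<^sub>0"
    using hull_in_sect by blast
  then have "m \<in> sect X R s" if "s \<in> S" for s
    using rel_transD[OF \<open>rel_trans X R\<close> \<open>m \<in> sect X R m\<^sub>0\<close> _ \<open>m\<^sub>0 \<in> X\<close>] best(2) that \<open>S \<subseteq> X\<close>
    by blast
  with \<open>m \<in> S\<close> show "m \<in> maximals X R S"
    by (simp add: best_in_maximals)
qed

text \<open>A point strictly better than some \<open>t \<in> R(m)\<close> cannot lie in a set on which \<open>m\<close> is best.\<close>

lemma locally_nonsatiated_sect_subset_closure:
  assumes "locally_nonsatiated X R" "rel_trans X R" "m \<in> X"
    and best: "\<forall>s\<in>S. m \<in> sect X R s"
  shows "sect X R m \<subseteq> closure (X - S)"
proof
  fix t assume t: "t \<in> sect X R m"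
  then have "t \<in> X" by (simp add: sect_def)
  have "y \<notin> S" if "y \<in> X" "t \<notin> sect X R y" for y
  proof
    assume "y \<in> S"
    then have "m \<in> sect X R y" using best by blast
    then have "t \<in> sect X R y"
      using rel_transD[OF \<open>rel_trans X R\<close> t _ \<open>m \<in> X\<close> \<open>y \<in> X\<close>] by blast
    with that show False by blast
  qed
  then have "{y \<in> X. y \<in> sect X R t \<and> t \<notin> sect X R y} \<subseteq> X - S"
    by blast
  moreover have "t \<in> closure {y \<in> X. y \<in> sect X R t \<and> t \<notin> sect X R y}"
    using \<open>locally_nonsatiated X R\<close> \<open>t \<in> X\<close> by (simp add: locally_nonsatiated_def)
  ultimately show "t \<in> closure (X - S)"
    by (meson closure_mono subsetD)
qed

lemma antichain_convex_level_set_convex: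
  fixes f :: "'v::real_vector \<Rightarrow> real"
  assumes "antichain_convex C A" "linear f" and pos: "\<forall>c\<in>C - {0}. 0 < f c"
  shows "convex {a \<in> A. f a = w}"
  unfolding convex_alt
proof (intro ballI allI impI)
  fix x y and u :: real
  assume x: "x \<in> {a \<in> A. f a = w}" and y: "y \<in> {a \<in> A. f a = w}" and u: "0 \<le> u \<and> u \<le> 1"
  have "f ((1 - u) *\<^sub>R x + u *\<^sub>R y) = (1 - u) * f x + u * f y"
    using \<open>linear f\<close> by (simp add: linear_add linear_scale)
  then have f_comb: "f ((1 - u) *\<^sub>R x + u *\<^sub>R y) = w"
    using x y by (simp add: algebra_simps)
  show "(1 - u) *\<^sub>R x + u *\<^sub>R y \<in> {a \<in> A. f a = w}"
  proof (cases "x = y")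
    case True
    then show ?thesis using x by (simp flip: scaleR_add_left)
  next
    case False
    have not_in_C: "c \<notin> C" if "c \<noteq> 0" "f c = 0" for c
    proof
      assume "c \<in> C"
      with pos that(1) have "0 < f c" by blast
      with that(2) show False by simp
    qed
    have "f (x - y) = 0" "f (y - x) = 0"
      using x y \<open>linear f\<close> by (simp_all add: linear_diff)
    then have "x - y \<notin> C" "y - x \<notin> C"
      using False not_in_C by simp_all
    moreover have "y - x \<notin> uminus ` C"
    proof
      assume "y - x \<in> uminus ` C"
      then obtain c where "c \<in> C" "- c = y - x" by auto
      then have "x - y \<in> C" by (metis minus_diff_eq minus_minus)
      with \<open>x - y \<notin> C\<close> show False by contradiction
    qed
    ultimately have "y - x \<notin> C \<union> uminus ` C"
      by blast
    then have "l *\<^sub>R x + (1 - l) *\<^sub>R y \<in> A" if "0 \<le> l" "l \<le> 1" for l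
      using assms(1) x y that unfolding antichain_convex_def by blast
    from this[of "1 - u"] u f_comb show ?thesis by simp
  qed
qed

lemma convex_combination_gt:
  fixes a b u v w :: real
  assumes "w < a" "w \<le> b" "0 < u" "0 \<le> v" "u + v = 1"
  shows "w < u * a + v * b"
proof -
  have "u * w < u * a" "v * w \<le> v * b"
    using assms by (simp_all add: mult_left_mono)
  then have "(u + v) * w < u * a + v * b"
    by (simp add: distrib_right)
  then show ?thesis
    using \<open>u + v = 1\<close> by simp
qed

lemma convex_Un_open_halfspace:
  fixes f :: "'v::real_vector \<Rightarrow> real"
  assumes "convex A" "linear f" "\<forall>a\<in>A. w \<le> f a"
  shows "convex (A \<union> {z. w < f z})"
proof (rule convexI)
  fix x y and u v :: real
  assume x: "x \<in> A \<union> {z. w < f z}" and y: "y \<in> A \<union> {z. w < f z}"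
    and uv: "0 \<le> u" "0 \<le> v" "u + v = 1"
  have fx: "w \<le> f x" and fy: "w \<le> f y" using x y assms(3) by auto
  have f_comb: "f (u *\<^sub>R x + v *\<^sub>R y) = u * f x + v * f y"
    using \<open>linear f\<close> by (simp add: linear_add linear_scale)
  consider "x \<in> A" "y \<in> A" | "u = 0" | "v = 0" | "w < f x" "0 < u" | "w < f y" "0 < v"
    using x y uv by force
  then show "u *\<^sub>R x + v *\<^sub>R y \<in> A \<union> {z. w < f z}"
  proof cases
    case 1
    then show ?thesis using \<open>convex A\<close> uv by (simp add: convex_def)
  next
    case 2
    then show ?thesis using uv y by simp
  next
    case 3
    then show ?thesis using uv x by simp
  next
    case 4
    then have "w < u * f x + v * f y"
      using fy uv by (intro convex_combination_gt) simp_all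
    then show ?thesis using f_comb by simp
  next
    case 5
    then have "w < v * f y + u * f x"
      using fx uv by (intro convex_combination_gt) simp_all
    then show ?thesis using f_comb by simp
  qed
qed

lemma antichain_convex_hull_below_level_subset:
  fixes f :: "'v::real_vector \<Rightarrow> real"
  assumes "antichain_convex C U" "linear f" "\<forall>c\<in>C - {0}. 0 < f c" "\<forall>u\<in>U. w \<le> f u"
  shows "{z. f z \<le> w} \<inter> convex hull U \<subseteq> U"
proof -
  let ?A = "{u \<in> U. f u = w}"
  have "convex (?A \<union> {z. w < f z})"
    by (rule convex_Un_open_halfspace[OF antichain_convex_level_set_convex[OF assms(1-3)] assms(2)])
      simp
  moreover have "U \<subseteq> ?A \<union> {z. w < f z}"
    using assms(4) by fastforce
  ultimately have "convex hull U \<subseteq> ?A \<union> {z. w < f z}"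
    by (simp add: hull_minimal)
  then show ?thesis by auto
qed

theorem theorem15:
  fixes X C :: "'v::{real_vector,topological_space} set"
    and R :: "('v \<times> 'v) set" and f :: "'v \<Rightarrow> real" and w :: real
  assumes "convex X" and "pcone X" and "0 \<in> X"
    and "f \<in> PX X"
    and "R \<subseteq> X \<times> X" and "total_preorder X R" and "locally_nonsatiated X R"
    and "C \<subseteq> X" and "convex C" and "pcone C"
    and "rel_antichain_convex C X R"
    and "maximals X R (Bw w f X) \<noteq> {}"
  shows "maximals X R (Bw w f X) = maximals X (convexification X R) (Bw w f X)"
proof
  let ?B = "Bw w f X"
  have "linear f" "continuous_on UNIV f" and pos: "\<forall>c\<in>C - {0}. 0 < f c"
    using \<open>f \<in> PX X\<close> \<open>C \<subseteq> X\<close> by (auto simp: PX_def dual_space_def)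
  have B_eq: "?B = {v \<in> X. f v \<le> w}" and "?B \<subseteq> X"
    by (auto simp: Bw_def Fw_def)
  have "rel_total X R" "rel_trans X R"
    using \<open>total_preorder X R\<close> by (simp_all add: total_preorder_def)
  obtain m\<^sub>0 where best: "m\<^sub>0 \<in> ?B" "\<forall>s\<in>?B. m\<^sub>0 \<in> sect X R s"
    using assms(12) by (auto simp: maximals_total_eq[OF \<open>rel_total X R\<close> \<open>?B \<subseteq> X\<close>])
  then have "m\<^sub>0 \<in> X" using \<open>?B \<subseteq> X\<close> by blast
  have "sect X R m\<^sub>0 \<subseteq> closure (X - ?B)"
    by (rule locally_nonsatiated_sect_subset_closure[OF assms(7) \<open>rel_trans X R\<close> \<open>m\<^sub>0 \<in> X\<close> best(2)])
  also have "\<dots> \<subseteq> {v. w \<le> f v}"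
    using closed_Collect_le[OF continuous_on_const \<open>continuous_on UNIV f\<close>]
    by (rule closure_minimal[rotated]) (auto simp: B_eq)
  finally have upper: "\<forall>u\<in>sect X R m\<^sub>0. w \<le> f u" by blast
  have "antichain_convex C (sect X R m\<^sub>0)"
    using assms(11) \<open>m\<^sub>0 \<in> X\<close> by (simp add: rel_antichain_convex_def)
  from antichain_convex_hull_below_level_subset[OF this \<open>linear f\<close> pos upper]
  have "?B \<inter> convex hull (sect X R m\<^sub>0) \<subseteq> sect X R m\<^sub>0"
    by (auto simp: B_eq)
  then show "maximals X (convexification X R) ?B \<subseteq> maximals X R ?B"
    by (rule maximals_convexification_subset_maximals[OF \<open>rel_trans X R\<close> \<open>?B \<subseteq> X\<close> best])
  show "maximals X R ?B \<subseteq> maximals X (convexification X R) ?B"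
    by (rule maximals_subset_maximals_convexification[OF \<open>rel_total X R\<close> \<open>?B \<subseteq> X\<close>])
qed

end
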